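(* Let $G$ be a connected graph whose vertex set is partitioned into three stable sets $X$, $Y$, $Z$ such that every vertex of $Y$ is adjacent to every vertex of $Z$, and suppose that every vertex of $X$ has at least one neighbour in $Y$ and at least one neighbour in $Z$. Then $G$ has the de Bruijn-Erd\H{o}s property: the metric space $(V(G), d_G)$ has a universal line or at least $|V(G)|$ distinct lines.
   Context: $d_G$ is the shortest-path distance of $G$. In a metric space $(V,\rho)$, an element $b$ is between $a$ and $c$ if $\rho(a,b)+\rho(b,c)=\rho(a,c)$; three elements are collinear if one of them is between the other two. For distinct $a,b\in V$, the line generated by $a$ and $b$ is the set consisting of $a$, $b$, and all elements $c$ such that $a,b,c$ are collinear. A line is universal if it equals the whole ground set $V$. *)

theory Defs
  imports Main
begin

text \<open>A finite simple graph is given by a finite vertex set V and a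
symmetric, irreflexive adjacency relation E (only its restriction to V matters).\<close>

definition simple_graph :: "'a set \<Rightarrow> ('a \<Rightarrow> 'a \<Rightarrow> bool) \<Rightarrow> bool" where
  "simple_graph V E \<longleftrightarrow> finite V \<and> (\<forall>u\<in>V. \<forall>v\<in>V. E u v \<longrightarrow> E v u) \<and> (\<forall>v\<in>V. \<not> E v v)"

text \<open>A walk in (V,E) from u to v: a nonempty vertex list in V whose consecutive
entries are adjacent; its length is the number of edges, length xs - 1.\<close>

definition is_walk :: "'a set \<Rightarrow> ('a \<Rightarrow> 'a \<Rightarrow> bool) \<Rightarrow> 'a list \<Rightarrow> 'a \<Rightarrow> 'a \<Rightarrow> bool" where
  "is_walk V E xs u v \<longleftrightarrow> xs \<noteq> [] \<and> set xs \<subseteq> V \<and> hd xs = u \<and> last xs = v \<and>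
     (\<forall>i. Suc i < length xs \<longrightarrow> E (xs ! i) (xs ! Suc i))"

definition connected_graph :: "'a set \<Rightarrow> ('a \<Rightarrow> 'a \<Rightarrow> bool) \<Rightarrow> bool" where
  "connected_graph V E \<longleftrightarrow> V \<noteq> {} \<and> (\<forall>u\<in>V. \<forall>v\<in>V. \<exists>xs. is_walk V E xs u v)"

definition gdist :: "'a set \<Rightarrow> ('a \<Rightarrow> 'a \<Rightarrow> bool) \<Rightarrow> 'a \<Rightarrow> 'a \<Rightarrow> nat" where
  "gdist V E u v = (LEAST n. \<exists>xs. is_walk V E xs u v \<and> length xs = Suc n)"

definition stable_set :: "('a \<Rightarrow> 'a \<Rightarrow> bool) \<Rightarrow> 'a set \<Rightarrow> bool" where
  "stable_set E S \<longleftrightarrow> (\<forall>u\<in>S. \<forall>v\<in>S. \<not> E u v)"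

definition between :: "('a \<Rightarrow> 'a \<Rightarrow> nat) \<Rightarrow> 'a \<Rightarrow> 'a \<Rightarrow> 'a \<Rightarrow> bool" where
  "between d a b c \<longleftrightarrow> d a b + d b c = d a c"

definition collinear3 :: "('a \<Rightarrow> 'a \<Rightarrow> nat) \<Rightarrow> 'a \<Rightarrow> 'a \<Rightarrow> 'a \<Rightarrow> bool" where
  "collinear3 d a b c \<longleftrightarrow> between d b a c \<or> between d a b c \<or> between d a c b"

definition line :: "'a set \<Rightarrow> ('a \<Rightarrow> 'a \<Rightarrow> nat) \<Rightarrow> 'a \<Rightarrow> 'a \<Rightarrow> 'a set" where
  "line V d a b = {a, b} \<union> {c \<in> V. collinear3 d a b c}"

definition lines :: "'a set \<Rightarrow> ('a \<Rightarrow> 'a \<Rightarrow> nat) \<Rightarrow> 'a set set" where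
  "lines V d = {line V d a b | a b. a \<in> V \<and> b \<in> V \<and> a \<noteq> b}"

definition has_universal_line :: "'a set \<Rightarrow> ('a \<Rightarrow> 'a \<Rightarrow> nat) \<Rightarrow> bool" where
  "has_universal_line V d \<longleftrightarrow> (\<exists>L\<in>lines V d. L = V)"

definition de_Bruijn_Erdos :: "'a set \<Rightarrow> ('a \<Rightarrow> 'a \<Rightarrow> nat) \<Rightarrow> bool" where
  "de_Bruijn_Erdos V d \<longleftrightarrow> has_universal_line V d \<or> card (lines V d) \<ge> card V"

end

theory Submission
  imports Defs
begin

(* Any two vertices are joined by a walk of length at most 3, so d(u,v) is 0, 1, 2 or 3 according
   as u = v, u ~ v, u and v have a common neighbour, or none of these.  Hence whether a vertex
   lies on the line generated by a and b is decided by adjacencies alone.  Assuming that no line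
   is universal, we map V injectively into the set of lines.

   If some x0 in X has a non-neighbour zo in Z (the case of Y is symmetric), fix neighbours y1 in
   Y and z1 in Z of x0 and send most vertices v to the line x0 v.  Two such lines coincide only in
   a few configurations; the vertices involved are sent to lines through y1, z1 or zo instead,
   and each coincidence that could remain would make some line y z universal.
   If X is complete to Y and Z, the graph is complete tripartite: every line consists of two of
   the parts together with at most two vertices of the third, and the vertex is read off from
   its line. *)

definition common_neighbour :: "'a set \<Rightarrow> ('a \<Rightarrow> 'a \<Rightarrow> bool) \<Rightarrow> 'a \<Rightarrow> 'a \<Rightarrow> bool" where
  "common_neighbour V E u v \<longleftrightarrow> (\<exists>w\<in>V. E u w \<and> E w v)"

lemma is_walk_singleton [simp]: "is_walk V E [a] u v \<longleftrightarrow> a = u \<and> a = v \<and> a \<in> V"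
  by (auto simp: is_walk_def)

lemma is_walk_Cons_Cons [simp]:
  "is_walk V E (a # b # xs) u v \<longleftrightarrow> a = u \<and> a \<in> V \<and> E a b \<and> is_walk V E (b # xs) b v"
  by (auto simp: is_walk_def All_less_Suc2)

lemma gdist_le_walk: "is_walk V E xs u v \<Longrightarrow> gdist V E u v \<le> length xs - 1"
  unfolding gdist_def by (rule Least_le) (auto simp: is_walk_def)

lemma shortest_walk:
  assumes "is_walk V E xs u v"
  obtains ys where "is_walk V E ys u v" "length ys = Suc (gdist V E u v)"
proof -
  have "\<exists>n ys. is_walk V E ys u v \<and> length ys = Suc n"
    using assms by (auto simp: is_walk_def intro!: exI[of _ "length xs - 1"])
  from LeastI_ex[OF this] show ?thesis
    using that unfolding gdist_def by blast
qed

lemma gdist_le_if_short_path: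
  assumes "u \<in> V" "v \<in> V"
  shows "gdist V E u u = 0" "E u v \<Longrightarrow> gdist V E u v \<le> 1"
    "common_neighbour V E u v \<Longrightarrow> gdist V E u v \<le> 2"
  using assms gdist_le_walk[of V E "[u]" u u] gdist_le_walk[of V E "[u, v]" u v]
    gdist_le_walk[of V E "[u, _, v]" u v]
  by (force simp: common_neighbour_def)+

lemma short_path_if_gdist_eq:
  assumes "is_walk V E xs u v"
  shows "gdist V E u v = 0 \<Longrightarrow> u = v" "gdist V E u v = 1 \<Longrightarrow> E u v"
    "gdist V E u v = 2 \<Longrightarrow> common_neighbour V E u v"
proof -
  obtain ys where ys: "is_walk V E ys u v" "length ys = Suc (gdist V E u v)"
    using shortest_walk[OF assms] .
  show "gdist V E u v = 0 \<Longrightarrow> u = v" "gdist V E u v = 1 \<Longrightarrow> E u v"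
    using ys by (auto simp: length_Suc_conv)
  show "gdist V E u v = 2 \<Longrightarrow> common_neighbour V E u v"
    using ys by (auto simp: length_Suc_conv numeral_2_eq_2 common_neighbour_def)
qed

lemma gdist_eq_if_short_walk:
  assumes walk: "is_walk V E xs u v" and short: "length xs \<le> 4"
  shows "gdist V E u v =
    (if u = v then 0 else if E u v then 1 else if common_neighbour V E u v then 2 else 3)"
proof -
  have "u \<in> V" "v \<in> V"
    using walk by (auto simp: is_walk_def dest: hd_in_set last_in_set)
  note upper = gdist_le_if_short_path[OF this] and lower = short_path_if_gdist_eq[OF walk]
  consider "gdist V E u v = 0" | "gdist V E u v = 1" | "gdist V E u v = 2" | "gdist V E u v = 3"
    using gdist_le_walk[OF walk] short by linarith
  then show ?thesis
  proof cases
    case 1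
    then show ?thesis using lower by simp
  next
    case 2
    then show ?thesis using lower upper by auto
  next
    case 3
    then show ?thesis using lower upper by fastforce
  next
    case 4
    then show ?thesis using upper by fastforce
  qed
qed

lemma endpoints_in_line [simp]: "a \<in> line V d a b" "b \<in> line V d a b"
  by (simp_all add: line_def)

lemma line_subset: "a \<in> V \<Longrightarrow> b \<in> V \<Longrightarrow> line V d a b \<subseteq> V"
  by (auto simp: line_def)

lemma line_in_lines: "a \<in> V \<Longrightarrow> b \<in> V \<Longrightarrow> a \<noteq> b \<Longrightarrow> line V d a b \<in> lines V d"
  by (auto simp: lines_def)

lemma line_ne_V_if_no_universal_line:
  "\<not> has_universal_line V d \<Longrightarrow> a \<in> V \<Longrightarrow> b \<in> V \<Longrightarrow> a \<noteq> b \<Longrightarrow> line V d a b \<noteq> V"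
  by (metis has_universal_line_def line_in_lines)

lemma finite_lines: "finite V \<Longrightarrow> finite (lines V d)"
  by (rule finite_subset[of _ "Pow V"]) (auto simp: lines_def line_def)

locale stable_tripartition =
  fixes V :: "'a set" and E :: "'a \<Rightarrow> 'a \<Rightarrow> bool" and X Y Z :: "'a set"
  assumes simple: "simple_graph V E"
    and partition: "X \<union> Y \<union> Z = V"
    and disjoint_XY: "X \<inter> Y = {}" and disjoint_XZ: "X \<inter> Z = {}" and disjoint_YZ: "Y \<inter> Z = {}"
    and stable_X: "stable_set E X" and stable_Y: "stable_set E Y" and stable_Z: "stable_set E Z"
    and complete_YZ: "\<forall>y\<in>Y. \<forall>z\<in>Z. E y z"
    and X_neighbours: "\<forall>x\<in>X. (\<exists>y\<in>Y. E x y) \<and> (\<exists>z\<in>Z. E x z)"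
    and X_nonempty: "X \<noteq> {}"
begin

lemmas disjoint_parts = disjoint_XY disjoint_XZ disjoint_YZ

abbreviation gline :: "'a \<Rightarrow> 'a \<Rightarrow> 'a set" where
  "gline a b \<equiv> line V (gdist V E) a b"

lemma finite_V: "finite V"
  using simple by (simp add: simple_graph_def)

lemma in_V: "v \<in> X \<Longrightarrow> v \<in> V" "v \<in> Y \<Longrightarrow> v \<in> V" "v \<in> Z \<Longrightarrow> v \<in> V"
  using partition by auto

lemma vertex_cases: "w \<in> X \<or> w \<in> Y \<or> w \<in> Z \<or> w \<notin> V"
  using partition by auto

lemma E_sym: "u \<in> V \<Longrightarrow> v \<in> V \<Longrightarrow> E u v \<Longrightarrow> E v u"
  using simple by (simp add: simple_graph_def)

lemma E_commute: "u \<in> V \<Longrightarrow> v \<in> V \<Longrightarrow> E v u \<longleftrightarrow> E u v"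
  using E_sym by blast

lemma E_YZ: "y \<in> Y \<Longrightarrow> z \<in> Z \<Longrightarrow> E y z"
  using complete_YZ by blast

lemma not_E_within:
  "x \<in> X \<Longrightarrow> x' \<in> X \<Longrightarrow> \<not> E x x'"
  "y \<in> Y \<Longrightarrow> y' \<in> Y \<Longrightarrow> \<not> E y y'"
  "z \<in> Z \<Longrightarrow> z' \<in> Z \<Longrightarrow> \<not> E z z'"
  using stable_X stable_Y stable_Z by (auto simp: stable_set_def)

lemma Z_neighbour: "u \<in> X \<union> Y \<Longrightarrow> \<exists>z\<in>Z. E u z"
  using X_neighbours X_nonempty E_YZ by blast

sublocale swap: stable_tripartition V E X Z Y
proof
  show "\<forall>z\<in>Z. \<forall>y\<in>Y. E z y"
    using complete_YZ E_sym in_V by blast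
qed (use simple partition disjoint_parts stable_X stable_Y stable_Z X_neighbours X_nonempty
     in auto)

lemma common_neighbour_commute:
  "u \<in> V \<Longrightarrow> v \<in> V \<Longrightarrow> common_neighbour V E v u \<longleftrightarrow> common_neighbour V E u v"
  unfolding common_neighbour_def using E_sym by blast

lemma common_neighbourI:
  "w \<in> V \<Longrightarrow> E u w \<Longrightarrow> E v w \<Longrightarrow> v \<in> V \<Longrightarrow> common_neighbour V E u v"
  unfolding common_neighbour_def using E_sym by blast

lemma short_walk_from_XY:
  assumes u: "u \<in> X \<union> Y" and v: "v \<in> V"
  shows "\<exists>xs. is_walk V E xs u v \<and> length xs \<le> 4"
proof -
  obtain zu where zu: "zu \<in> Z" "E u zu"
    using Z_neighbour u by blast
  show ?thesis
  proof (cases "v \<in> Y")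
    case True
    then show ?thesis
      using u zu by (intro exI[of _ "[u, zu, v]"]) (auto simp: in_V swap.E_YZ)
  next
    case False
    then obtain yv where "yv \<in> Y" "E v yv"
      using swap.Z_neighbour v partition by blast
    then show ?thesis
      using u v zu by (intro exI[of _ "[u, zu, yv, v]"]) (auto simp: in_V swap.E_YZ E_commute)
  qed
qed

end

context stable_tripartition
begin

lemma gdist_eq:
  assumes "u \<in> V" "v \<in> V"
  shows "gdist V E u v =
    (if u = v then 0 else if E u v then 1 else if common_neighbour V E u v then 2 else 3)"
proof -
  obtain xs where "is_walk V E xs u v" "length xs \<le> 4"
    using assms partition short_walk_from_XY swap.short_walk_from_XY by blast
  then show ?thesis
    by (rule gdist_eq_if_short_walk)
qed

lemma gdist_commute: "u \<in> V \<Longrightarrow> v \<in> V \<Longrightarrow> gdist V E v u = gdist V E u v"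
  by (simp add: gdist_eq E_commute common_neighbour_commute)

lemma gdist_Y_Y: "y \<in> Y \<Longrightarrow> y' \<in> Y \<Longrightarrow> gdist V E y y' = (if y = y' then 0 else 2)"
proof -
  assume y: "y \<in> Y" "y' \<in> Y"
  obtain z where "z \<in> Z"
    using X_neighbours X_nonempty by blast
  then have "common_neighbour V E y y'"
    using y E_YZ in_V by (blast intro: common_neighbourI)
  then show ?thesis
    using y in_V not_E_within by (auto simp: gdist_eq)
qed

lemma gdist_Y_Z: "y \<in> Y \<Longrightarrow> z \<in> Z \<Longrightarrow> gdist V E y z = 1"
  using E_YZ disjoint_YZ in_V by (auto simp: gdist_eq)

lemma gdist_X_Y:
  assumes "x \<in> X" "y \<in> Y"
  shows "gdist V E x y = (if E x y then 1 else 2)" "gdist V E y x = (if E x y then 1 else 2)"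
proof -
  obtain z where z: "z \<in> Z" "E x z"
    using X_neighbours assms by blast
  have "common_neighbour V E x y" "common_neighbour V E y x"
    using assms z E_YZ in_V by (blast intro: common_neighbourI E_sym)+
  then show "gdist V E x y = (if E x y then 1 else 2)" "gdist V E y x = (if E x y then 1 else 2)"
    using assms disjoint_XY in_V by (auto simp: gdist_eq E_commute)
qed

lemma gdist_X_X:
  "x \<in> X \<Longrightarrow> x' \<in> X \<Longrightarrow>
    gdist V E x x' = (if x = x' then 0 else if common_neighbour V E x x' then 2 else 3)"
  using in_V not_E_within by (auto simp: gdist_eq)

end

context stable_tripartition
begin

lemma gline_commute: "a \<in> V \<Longrightarrow> b \<in> V \<Longrightarrow> gline b a = gline a b"
  by (auto simp: line_def collinear3_def between_def gdist_commute)

lemma mem_gline_iff: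
  "w \<in> gline a b \<longleftrightarrow> w = a \<or> w = b \<or> (w \<in> V \<and> collinear3 (gdist V E) a b w)"
  by (auto simp: line_def)

lemmas gdist_parts = gdist_Y_Y gdist_Y_Z swap.gdist_Y_Z gdist_X_Y gdist_X_X
  swap.gdist_Y_Y swap.gdist_X_Y

lemma mem_gline_YY:
  assumes "y \<in> Y" "y' \<in> Y" "y \<noteq> y'"
  shows "w \<in> gline y y' \<longleftrightarrow> w = y \<or> w = y' \<or> w \<in> Z \<or> (w \<in> X \<and> E w y \<and> E w y')"
  using vertex_cases[of w] assms disjoint_parts in_V
  by (elim disjE)
    (auto simp: mem_gline_iff collinear3_def between_def gdist_parts E_commute split: if_splits)

lemma mem_gline_YZ:
  assumes "y \<in> Y" "z \<in> Z"
  shows "w \<in> gline y z \<longleftrightarrow> w \<in> Y \<or> w \<in> Z \<or> (w \<in> X \<and> E w y \<noteq> E w z)"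
  using vertex_cases[of w] assms disjoint_parts in_V
  by (elim disjE)
    (auto simp: mem_gline_iff collinear3_def between_def gdist_parts E_commute split: if_splits)

lemma mem_gline_XX:
  assumes "x \<in> X" "x' \<in> X" "x \<noteq> x'"
  shows "w \<in> gline x x' \<longleftrightarrow> w = x \<or> w = x' \<or> ((w \<in> Y \<or> w \<in> Z) \<and>
     (if common_neighbour V E x x' then E x w \<and> E x' w else E x w \<or> E x' w))"
  using vertex_cases[of w] assms disjoint_parts in_V
  by (elim disjE; auto simp: mem_gline_iff collinear3_def between_def gdist_parts E_commute
      split: if_splits; meson common_neighbourI E_sym in_V)

lemma mem_gline_XY_adjacent:
  assumes "x \<in> X" "y \<in> Y" "E x y"
  shows "w \<in> gline x y \<longleftrightarrow> w = x \<or> (w \<in> Y \<and> E x w) \<or> (w \<in> Z \<and> \<not> E x w) \<or>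
    (w \<in> X \<and> (E w y \<or> \<not> common_neighbour V E x w))"
  using vertex_cases[of w] assms disjoint_parts in_V
  by (elim disjE; auto simp: mem_gline_iff collinear3_def between_def gdist_parts E_commute
      split: if_splits; meson common_neighbourI E_sym in_V)

lemma mem_gline_XY_nonadjacent:
  assumes "x \<in> X" "y \<in> Y" "\<not> E x y"
  shows "w \<in> gline x y \<longleftrightarrow> w = x \<or> w = y \<or> (w \<in> Z \<and> E x w) \<or>
    (w \<in> X \<and> w \<noteq> x \<and> E w y \<and> \<not> common_neighbour V E x w)"
  using vertex_cases[of w] assms disjoint_parts in_V
  by (elim disjE; auto simp: mem_gline_iff collinear3_def between_def gdist_parts E_commute
      split: if_splits; meson common_neighbourI E_sym in_V)

end

context stable_tripartition
begin

lemmas mem_gline = mem_gline_YY mem_gline_YZ mem_gline_XX mem_gline_XY_adjacent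
  mem_gline_XY_nonadjacent swap.mem_gline_YY swap.mem_gline_YZ swap.mem_gline_XY_adjacent
  swap.mem_gline_XY_nonadjacent

lemma gline_XX_inj:
  assumes x: "x \<in> X" "x' \<in> X" "x'' \<in> X" "x \<noteq> x'" "x \<noteq> x''"
    and eq: "gline x x' = gline x x''"
  shows "x' = x''"
proof -
  have "x'' \<in> gline x x'"
    using eq by simp
  then show ?thesis
    using x disjoint_parts by (auto simp: mem_gline)
qed

lemma gline_YY_inj:
  assumes y: "y \<in> Y" "y' \<in> Y" "y'' \<in> Y" "y \<noteq> y''" "y' \<noteq> y''"
    and eq: "gline y y'' = gline y' y''"
  shows "y = y'"
proof -
  have "y \<in> gline y' y''"
    using eq[symmetric] by simp
  then show ?thesis
    using y disjoint_parts by (auto simp: mem_gline)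
qed

lemma gline_XX_ne_XY:
  assumes x: "x \<in> X" "x' \<in> X" "x \<noteq> x'" and y: "y \<in> Y"
  shows "gline x x' \<noteq> gline x y"
proof
  assume eq: "gline x x' = gline x y"
  obtain y1 where y1: "y1 \<in> Y" "E x y1"
    using X_neighbours x by blast
  obtain z1 where z1: "z1 \<in> Z" "E x z1"
    using X_neighbours x by blast
  obtain z' where z': "z' \<in> Z" "E x' z'"
    using X_neighbours x by blast
  have same: "w \<in> gline x x' \<longleftrightarrow> w \<in> gline x y" for w
    using eq by simp
  consider "E x y" "common_neighbour V E x x'" | "E x y" "\<not> common_neighbour V E x x'"
    | "\<not> E x y" "common_neighbour V E x x'" | "\<not> E x y" "\<not> common_neighbour V E x x'"
    by blast
  then show False
  proof cases
    case 1
    then show False using same[of z'] x y z' disjoint_parts by (auto simp: mem_gline)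
  next
    case 2
    then show False using same[of z1] x y z1 disjoint_parts by (auto simp: mem_gline)
  next
    case 3
    then show False using same[of y] x y disjoint_parts by (auto simp: mem_gline)
  next
    case 4
    then show False using same[of y1] x y y1 disjoint_parts by (auto simp: mem_gline)
  qed
qed

lemma gline_XX_ne_YY:
  assumes x: "x \<in> X" "x' \<in> X" "x \<noteq> x'" and y: "y \<in> Y" "y' \<in> Y" "y \<noteq> y'" "E x y" "E x y'"
    and z: "z \<in> Z" "\<not> E x z"
  shows "gline x x' \<noteq> gline y y'"
proof
  assume eq: "gline x x' = gline y y'"
  obtain y'' where y'': "y'' \<in> Y" "E x' y''"
    using X_neighbours x by blast
  have same: "w \<in> gline x x' \<longleftrightarrow> w \<in> gline y y'" for w
    using eq by simp
  show False
  proof (cases "common_neighbour V E x x'")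
    case True
    then show False using same[of z] x y z disjoint_parts by (auto simp: mem_gline)
  next
    case False
    then have "y'' \<in> gline y y'"
      using same[of y''] x y'' disjoint_parts by (auto simp: mem_gline)
    then have "E x' y \<or> E x' y'"
      using x y y'' disjoint_parts by (auto simp: mem_gline)
    then show False
      using False x y in_V by (auto intro: common_neighbourI)
  qed
qed

lemma gline_YY_ne_gline_X:
  assumes x: "x \<in> X" and y: "y \<in> Y" "y' \<in> Y" "y \<noteq> y'" "E x y" "E x y'" and w: "w \<in> Y \<union> Z"
  shows "gline y y' \<noteq> gline x w"
proof
  assume eq: "gline y y' = gline x w"
  obtain z where z: "z \<in> Z" "E x z"
    using X_neighbours x by blast
  have "v \<in> gline y y' \<longleftrightarrow> v \<in> gline x w" for v
    using eq by simp
  from this[of y] this[of z] show False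
    using x y z w disjoint_parts by (cases "E x w") (auto simp: mem_gline)
qed

lemma adjacent_if_gline_XY_eq_XY:
  assumes x: "x \<in> X" and y: "y \<in> Y" "y' \<in> Y" "y \<noteq> y'" and eq: "gline x y = gline x y'"
  shows "E x y"
proof (rule ccontr)
  assume "\<not> E x y"
  moreover have "y' \<in> gline x y"
    using eq by simp
  ultimately show False
    using x y disjoint_parts by (auto simp: mem_gline)
qed

lemma exactly_one_adjacent_if_gline_XY_eq_XZ:
  assumes x: "x \<in> X" and y: "y \<in> Y" and z: "z \<in> Z" and eq: "gline x y = gline x z"
  shows "E x y \<longleftrightarrow> \<not> E x z"
proof -
  have "y \<in> gline x z"
    using eq endpoints_in_line(2)[of y V "gdist V E" x] by simp
  then show ?thesis
    using x y z disjoint_parts by (cases "E x z") (auto simp: mem_gline)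
qed

lemma unique_X_neighbour_if_gline_XY_eq_XZ:
  assumes x: "x \<in> X" and y: "y \<in> Y" "\<not> E x y" and z: "z \<in> Z" "E x z"
    and eq: "gline x y = gline x z" and x': "x' \<in> X" "x' \<noteq> x"
  shows "\<not> E x' z"
proof
  assume "E x' z"
  then have "x' \<in> gline x z" "common_neighbour V E x x'"
    using x z x' disjoint_parts in_V by (auto simp: mem_gline intro!: common_neighbourI[of z])
  then show False
    using eq[symmetric] x y x' disjoint_parts by (auto simp: mem_gline)
qed

lemma gline_YZ_eq_V_iff:
  assumes y: "y \<in> Y" and z: "z \<in> Z"
  shows "gline y z = V \<longleftrightarrow> (\<forall>x\<in>X. E x y \<noteq> E x z)"
proof
  show "\<forall>x\<in>X. E x y \<noteq> E x z" if universal: "gline y z = V"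
  proof
    fix x assume "x \<in> X"
    then have "x \<in> gline y z"
      using universal in_V by simp
    then show "E x y \<noteq> E x z"
      using \<open>x \<in> X\<close> y z disjoint_parts by (auto simp: mem_gline)
  qed
  assume separating: "\<forall>x\<in>X. E x y \<noteq> E x z"
  have "w \<in> gline y z" if "w \<in> V" for w
    using vertex_cases[of w] that separating y z by (auto simp: mem_gline)
  moreover have "gline y z \<subseteq> V"
    using y z by (simp add: line_subset in_V)
  ultimately show "gline y z = V"
    by blast
qed

lemma gline_YZ_universal_if_eq_gline_YY:
  assumes y: "y \<in> Y" "y' \<in> Y" "y \<noteq> y'" and z: "z \<in> Z" and eq: "gline y' z = gline y y'"
  shows "gline y z = V"
proof -
  have same: "w \<in> gline y' z \<longleftrightarrow> w \<in> gline y y'" for w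
    using eq by simp
  have "Y = {y, y'}"
    using same y z disjoint_parts by (auto simp: mem_gline)
  moreover have "E x y' \<noteq> E x z \<longleftrightarrow> E x y \<and> E x y'" if "x \<in> X" for x
    using same[of x] that y z disjoint_parts by (auto simp: mem_gline)
  ultimately have "E x y \<noteq> E x z" if "x \<in> X" for x
    using that X_neighbours by blast
  then show ?thesis
    using y z by (simp add: gline_YZ_eq_V_iff)
qed

end

context stable_tripartition
begin

lemma gline_YZ_universal_if_pencil_collisions:
  assumes x: "x \<in> X" and y1: "y1 \<in> Y" "E x y1" and z1: "z1 \<in> Z" "E x z1"
    and y: "y \<in> Y" "\<not> E x y" and z: "z \<in> Z" "\<not> E x z"
    and eq_y: "gline x y = gline x z1" and eq_z: "gline x z = gline x y1"
    and eq: "gline y y1 = gline z z1"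
  shows "gline y z1 = V"
proof -
  have "y \<noteq> y1" "z \<noteq> z1"
    using y y1 z z1 by blast+
  have "Y = {y, y1}"
  proof -
    have "w \<in> gline y y1" if "w \<in> Y" for w
      using eq that z z1 \<open>z \<noteq> z1\<close> by (auto simp: mem_gline)
    then show ?thesis
      using y y1 \<open>y \<noteq> y1\<close> disjoint_parts by (auto simp: mem_gline)
  qed
  have "E w y \<noteq> E w z1" if w: "w \<in> X" for w
  proof (cases "w = x")
    case False
    then have "\<not> E w z1" "\<not> E w y1"
      using unique_X_neighbour_if_gline_XY_eq_XZ[OF x y z1 eq_y]
        swap.unique_X_neighbour_if_gline_XY_eq_XZ[OF x z y1 eq_z] w by blast+
    then show ?thesis
      using X_neighbours w \<open>Y = {y, y1}\<close> by blast
  qed (use y z1 in blast)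
  then show ?thesis
    using y z1 by (simp add: gline_YZ_eq_V_iff)
qed

end

section \<open>The complete tripartite case\<close>

locale complete_tripartition = stable_tripartition +
  fixes x0 y1 z1 :: 'a
  assumes X_complete: "\<And>x w. x \<in> X \<Longrightarrow> w \<in> Y \<union> Z \<Longrightarrow> E x w"
    and x0: "x0 \<in> X" and y1: "y1 \<in> Y" and z1: "z1 \<in> Z"
    and no_universal_line: "\<not> has_universal_line V (gdist V E)"
begin

lemma gline_XX: "x \<in> X \<Longrightarrow> x' \<in> X \<Longrightarrow> x \<noteq> x' \<Longrightarrow> gline x x' = {x, x'} \<union> Y \<union> Z"
proof -
  assume x: "x \<in> X" "x' \<in> X" "x \<noteq> x'"
  obtain y where "y \<in> Y"
    using X_neighbours X_nonempty by blast
  then have "common_neighbour V E x x'"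
    using x X_complete in_V by (blast intro: common_neighbourI)
  then show ?thesis
    using x X_complete disjoint_parts by (auto simp: mem_gline)
qed

lemma gline_YY: "y \<in> Y \<Longrightarrow> y' \<in> Y \<Longrightarrow> y \<noteq> y' \<Longrightarrow> gline y y' = X \<union> {y, y'} \<union> Z"
  using X_complete disjoint_parts by (auto simp: mem_gline)

lemma gline_ZZ: "z \<in> Z \<Longrightarrow> z' \<in> Z \<Longrightarrow> z \<noteq> z' \<Longrightarrow> gline z z' = X \<union> Y \<union> {z, z'}"
  using X_complete disjoint_parts by (auto simp: mem_gline)

lemma gline_YZ: "y \<in> Y \<Longrightarrow> z \<in> Z \<Longrightarrow> gline y z = Y \<union> Z"
  using X_complete disjoint_parts by (auto simp: mem_gline)

lemma gline_XY: "x \<in> X \<Longrightarrow> y \<in> Y \<Longrightarrow> gline x y = X \<union> Y"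
  using X_complete disjoint_parts by (auto simp: mem_gline)

lemma gline_XZ: "x \<in> X \<Longrightarrow> z \<in> Z \<Longrightarrow> gline x z = X \<union> Z"
  using X_complete disjoint_parts by (auto simp: mem_gline)

lemma third_vertex:
  assumes "A \<in> {X, Y, Z}" "a \<in> A" "b \<in> A" "a \<noteq> b"
  shows "\<exists>w\<in>A. w \<noteq> a \<and> w \<noteq> b"
proof -
  have "a \<in> V" "b \<in> V"
    using assms in_V by auto
  then have "gline a b \<noteq> V"
    using line_ne_V_if_no_universal_line[OF no_universal_line] assms(4) by blast
  then show ?thesis
    using assms gline_XX gline_YY gline_ZZ partition by auto
qed

definition line_of :: "'a \<Rightarrow> 'a set" where
  "line_of v = (if v = x0 then gline y1 z1 else if v \<in> X then gline x0 v
      else if v = y1 then gline x0 y1 else if v = z1 then gline x0 z1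
      else if v \<in> Y then gline v y1 else gline v z1)"

lemma line_of_cases:
  assumes "v \<in> V"
  obtains (chosen_X) "v = x0" "line_of v = Y \<union> Z"
  | (X) "v \<in> X" "v \<noteq> x0" "line_of v = {x0, v} \<union> Y \<union> Z"
  | (chosen_Y) "v = y1" "line_of v = X \<union> Y"
  | (chosen_Z) "v = z1" "line_of v = X \<union> Z"
  | (Y) "v \<in> Y" "v \<noteq> y1" "line_of v = X \<union> {v, y1} \<union> Z"
  | (Z) "v \<in> Z" "v \<noteq> z1" "line_of v = X \<union> Y \<union> {v, z1}"
proof -
  consider "v = x0" | "v \<in> X" "v \<noteq> x0" | "v = y1" | "v = z1" | "v \<in> Y" "v \<noteq> y1"
    | "v \<in> Z" "v \<noteq> z1"
    using assms vertex_cases[of v] by blast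
  then show thesis
  proof cases
    case 1
    then show thesis using y1 z1 by (intro chosen_X) (simp_all add: line_of_def gline_YZ)
  next
    case 2
    then show thesis using x0 by (intro X) (simp_all add: line_of_def gline_XX)
  next
    case 3
    then show thesis using x0 y1 disjoint_parts by (intro chosen_Y) (auto simp: line_of_def gline_XY)
  next
    case 4
    then show thesis using x0 y1 z1 disjoint_parts by (intro chosen_Z) (auto simp: line_of_def gline_XZ)
  next
    case 5
    then show thesis using x0 y1 z1 disjoint_parts by (intro Y) (auto simp: line_of_def gline_YY)
  next
    case 6
    then show thesis using x0 y1 z1 disjoint_parts by (intro Z) (auto simp: line_of_def gline_ZZ)
  qed
qed

(* Which of x0, z1, y1 and of the parts X, Y a line misses tells which case of line_of_cases
   produced it. *)
definition vertex_of :: "'a set \<Rightarrow> 'a" where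
  "vertex_of L = (if x0 \<notin> L then x0 else if z1 \<notin> L then y1 else if y1 \<notin> L then z1
      else if \<not> X \<subseteq> L then the_elem (L \<inter> X - {x0})
      else if \<not> Y \<subseteq> L then the_elem (L \<inter> Y - {y1})
      else the_elem (L \<inter> Z - {z1}))"

lemma vertex_of_line_of:
  assumes v: "v \<in> V" shows "vertex_of (line_of v) = v"
  using v
proof (cases rule: line_of_cases)
  case X
  moreover have "({x0, v} \<union> Y \<union> Z) \<inter> X - {x0} = {v}"
    using X disjoint_parts by auto
  ultimately show ?thesis
    using x0 y1 z1 third_vertex[of X x0 v] by (auto simp: vertex_of_def)
next
  case Y
  moreover have "(X \<union> {v, y1} \<union> Z) \<inter> Y - {y1} = {v}"
    using Y disjoint_parts by auto
  ultimately show ?thesis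
    using x0 y1 z1 third_vertex[of Y v y1] by (auto simp: vertex_of_def)
next
  case Z
  moreover have "(X \<union> Y \<union> {v, z1}) \<inter> Z - {z1} = {v}"
    using Z disjoint_parts by auto
  ultimately show ?thesis
    using x0 y1 z1 by (auto simp: vertex_of_def)
qed (use x0 y1 z1 disjoint_parts in \<open>auto simp: vertex_of_def\<close>)

lemma card_V_le_card_lines: "card V \<le> card (lines V (gdist V E))"
proof -
  have "inj_on line_of V"
    using vertex_of_line_of by (rule inj_on_inverseI)
  moreover have "line_of v \<in> lines V (gdist V E)" if "v \<in> V" for v
    using that x0 y1 z1 in_V disjoint_parts by (auto simp: line_of_def intro!: line_in_lines)
  ultimately show ?thesis
    using finite_lines[OF finite_V] by (blast intro: card_inj_on_le)
qed

end

section \<open>A vertex of X with a non-neighbour in Z\<close>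

locale stable_tripartition_nonadjacent = stable_tripartition +
  fixes x0 y1 z1 zo :: 'a
  assumes x0: "x0 \<in> X" and y1: "y1 \<in> Y" "E x0 y1" and z1: "z1 \<in> Z" "E x0 z1"
    and zo: "zo \<in> Z" "\<not> E x0 zo"
    and no_universal_line: "\<not> has_universal_line V (gdist V E)"
begin

(* Two lines x0 v and x0 v' with v \<noteq> v' can only coincide if v, v' are neighbours of x0 in the
   same part, or a neighbour and a non-neighbour of x0 in different parts.  The vertices that
   could take part in such a coincidence (other than y1 and z1) are sent to lines through y1, z1
   or zo instead; zo is used for Z_adj so that these lines avoid x0. *)
definition Y_adj :: "'a set" where "Y_adj = {y \<in> Y. y \<noteq> y1 \<and> E x0 y}"
definition Y_collide :: "'a set" where "Y_collide = {y \<in> Y. \<not> E x0 y \<and> gline x0 y = gline x0 z1}"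
definition Z_adj :: "'a set" where "Z_adj = {z \<in> Z. z \<noteq> z1 \<and> E x0 z}"
definition Z_collide :: "'a set" where "Z_collide = {z \<in> Z. \<not> E x0 z \<and> gline x0 z = gline x0 y1}"
definition pencil :: "'a set" where
  "pencil = V - ({x0} \<union> Y_adj \<union> Y_collide \<union> Z_adj \<union> Z_collide)"

definition line_of :: "'a \<Rightarrow> 'a set" where
  "line_of v =
    (if v = x0 then gline y1 z1
     else if v \<in> Y_adj \<union> Y_collide then gline v y1
     else if v \<in> Z_adj then gline v zo
     else if v \<in> Z_collide then gline v z1
     else gline x0 v)"

lemma pencil_Y_adjacent: "v \<in> pencil \<Longrightarrow> v \<in> Y \<Longrightarrow> E x0 v \<Longrightarrow> v = y1"
  by (auto simp: pencil_def Y_adj_def)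

lemma pencil_Z_adjacent: "v \<in> pencil \<Longrightarrow> v \<in> Z \<Longrightarrow> E x0 v \<Longrightarrow> v = z1"
  by (auto simp: pencil_def Z_adj_def)

lemma pencil_Y_nonadjacent:
  "v \<in> pencil \<Longrightarrow> v \<in> Y \<Longrightarrow> \<not> E x0 v \<Longrightarrow> gline x0 v \<noteq> gline x0 z1"
  by (auto simp: pencil_def Y_collide_def)

lemma pencil_Z_nonadjacent:
  "v \<in> pencil \<Longrightarrow> v \<in> Z \<Longrightarrow> \<not> E x0 v \<Longrightarrow> gline x0 v \<noteq> gline x0 y1"
  by (auto simp: pencil_def Z_collide_def)

lemma inj_on_pencil: "inj_on (gline x0) pencil"
proof (rule inj_onI)
  fix u v assume u: "u \<in> pencil" and v: "v \<in> pencil" and eq: "gline x0 u = gline x0 v"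
  have "u \<in> V - {x0}" "v \<in> V - {x0}"
    using u v by (auto simp: pencil_def)
  then consider "u \<in> X" "v \<in> X" | "u \<in> X" "v \<in> Y \<union> Z" | "u \<in> Y \<union> Z" "v \<in> X"
    | "u \<in> Y" "v \<in> Y" | "u \<in> Z" "v \<in> Z" | "u \<in> Y" "v \<in> Z" | "u \<in> Z" "v \<in> Y"
    using partition by blast
  then show "u = v"
  proof cases
    case 1
    then show ?thesis
      using gline_XX_inj x0 eq \<open>u \<in> V - {x0}\<close> \<open>v \<in> V - {x0}\<close> by blast
  next
    case 2
    then show ?thesis
      using gline_XX_ne_XY swap.gline_XX_ne_XY x0 eq \<open>u \<in> V - {x0}\<close> by blast
  next
    case 3
    then show ?thesis
      using gline_XX_ne_XY swap.gline_XX_ne_XY x0 eq[symmetric] \<open>v \<in> V - {x0}\<close> by blast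
  next
    case 4
    then show ?thesis
      using adjacent_if_gline_XY_eq_XY[OF x0] pencil_Y_adjacent u v eq by metis
  next
    case 5
    then show ?thesis
      using swap.adjacent_if_gline_XY_eq_XY[OF x0] pencil_Z_adjacent u v eq by metis
  next
    case 6
    then show ?thesis
      using exactly_one_adjacent_if_gline_XY_eq_XZ[OF x0] pencil_Y_adjacent pencil_Z_adjacent
        pencil_Y_nonadjacent pencil_Z_nonadjacent u v eq by metis
  next
    case 7
    then show ?thesis
      using exactly_one_adjacent_if_gline_XY_eq_XZ[OF x0] pencil_Y_adjacent pencil_Z_adjacent
        pencil_Y_nonadjacent pencil_Z_nonadjacent u v eq by metis
  qed
qed

lemma gline_YZ_ne_V:
  assumes "y \<in> Y" "z \<in> Z" shows "gline y z \<noteq> V" "gline z y \<noteq> V"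
proof -
  have "y \<noteq> z"
    using assms disjoint_YZ by blast
  with assms show "gline y z \<noteq> V" "gline z y \<noteq> V"
    using line_ne_V_if_no_universal_line[OF no_universal_line] in_V by simp_all
qed

lemma line_of_x0: "line_of x0 = gline y1 z1"
  by (simp add: line_of_def)

lemma line_of_Y: "v \<in> Y_adj \<union> Y_collide \<Longrightarrow> line_of v = gline v y1"
  using x0 disjoint_parts by (auto simp: line_of_def Y_adj_def Y_collide_def)

lemma line_of_Z_adj: "v \<in> Z_adj \<Longrightarrow> line_of v = gline v zo"
  using x0 disjoint_parts by (auto simp: line_of_def Y_adj_def Y_collide_def Z_adj_def)

lemma line_of_Z_collide: "v \<in> Z_collide \<Longrightarrow> line_of v = gline v z1"
  using x0 disjoint_parts
  by (auto simp: line_of_def Y_adj_def Y_collide_def Z_adj_def Z_collide_def)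

lemma line_of_pencil: "v \<in> pencil \<Longrightarrow> line_of v = gline x0 v"
  by (auto simp: line_of_def pencil_def)

lemma line_of_cases:
  assumes "v \<in> V"
  obtains (base) "v = x0" "line_of v = gline y1 z1"
  | (Y_adj) "v \<in> Y_adj" "v \<in> Y" "v \<noteq> y1" "E x0 v" "line_of v = gline v y1"
  | (Y_collide) "v \<in> Y_collide" "v \<in> Y" "v \<noteq> y1" "\<not> E x0 v" "gline x0 v = gline x0 z1"
      "line_of v = gline v y1"
  | (Z_adj) "v \<in> Z_adj" "v \<in> Z" "v \<noteq> z1" "v \<noteq> zo" "E x0 v" "line_of v = gline v zo"
  | (Z_collide) "v \<in> Z_collide" "v \<in> Z" "v \<noteq> z1" "\<not> E x0 v" "gline x0 v = gline x0 y1"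
      "line_of v = gline v z1"
  | (pencil) "v \<in> pencil" "v \<noteq> x0" "line_of v = gline x0 v"
proof -
  consider "v = x0" | "v \<in> Y_adj" | "v \<in> Y_collide" | "v \<in> Z_adj" | "v \<in> Z_collide"
    | "v \<in> pencil"
    using assms by (auto simp: pencil_def)
  then show thesis
  proof cases
    case 1
    then show thesis using base line_of_x0 by simp
  next
    case 2
    then show thesis using Y_adj line_of_Y by (simp add: Y_adj_def)
  next
    case 3
    then show thesis using Y_collide line_of_Y y1 by (auto simp: Y_collide_def)
  next
    case 4
    then show thesis using Z_adj line_of_Z_adj zo by (auto simp: Z_adj_def)
  next
    case 5
    then show thesis using Z_collide line_of_Z_collide z1 by (auto simp: Z_collide_def)
  next
    case 6
    then show thesis using pencil line_of_pencil by (auto simp: pencil_def)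
  qed
qed

lemma x0_in_line_of:
  assumes "v \<in> pencil \<union> Y_adj" shows "x0 \<in> line_of v"
proof -
  have "v \<in> V"
    using assms in_V by (auto simp: pencil_def Y_adj_def)
  then show ?thesis
    by (cases rule: line_of_cases) (use assms x0 y1 disjoint_parts in
        \<open>auto simp: mem_gline pencil_def Y_adj_def Y_collide_def Z_adj_def Z_collide_def\<close>)
qed

lemma x0_notin_line_of:
  assumes "v \<in> {x0} \<union> Y_collide \<union> Z_collide \<union> Z_adj" shows "x0 \<notin> line_of v"
proof -
  have "v \<in> V"
    using assms x0 in_V by (auto simp: Y_collide_def Z_adj_def Z_collide_def)
  then show ?thesis
    by (cases rule: line_of_cases) (use assms x0 y1 z1 zo disjoint_parts in
        \<open>auto simp: mem_gline pencil_def Y_adj_def Y_collide_def Z_adj_def Z_collide_def\<close>)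
qed

lemma z1_in_line_of:
  assumes "v \<in> {x0} \<union> Y_collide \<union> Z_collide" shows "z1 \<in> line_of v"
proof -
  have "v \<in> V"
    using assms x0 in_V by (auto simp: Y_collide_def Z_collide_def)
  then show ?thesis
    by (cases rule: line_of_cases) (use assms x0 y1 z1 disjoint_parts in
        \<open>auto simp: mem_gline pencil_def Y_adj_def Y_collide_def Z_adj_def Z_collide_def\<close>)
qed

lemma z1_notin_line_of:
  assumes "v \<in> Z_adj" shows "z1 \<notin> line_of v"
proof -
  have "v \<in> V"
    using assms in_V by (auto simp: Z_adj_def)
  then show ?thesis
    by (cases rule: line_of_cases) (use assms x0 z1 zo disjoint_parts in
        \<open>auto simp: mem_gline pencil_def Y_adj_def Y_collide_def Z_adj_def Z_collide_def\<close>)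
qed

lemma inj_on_line_of_through_x0: "inj_on line_of (pencil \<union> Y_adj)"
proof (rule inj_onI)
  have pencil_ne_Y_adj: "line_of u \<noteq> line_of v" if u: "u \<in> pencil" and v: "v \<in> Y_adj" for u v
  proof -
    have "u \<in> V - {x0}" "v \<in> Y" "v \<noteq> y1" "E x0 v"
      using u v by (auto simp: pencil_def Y_adj_def)
    then have "gline x0 u \<noteq> gline v y1"
      using partition gline_XX_ne_YY[OF x0 _ _ _ y1(1)] gline_YY_ne_gline_X[OF x0 _ y1(1)]
        x0 y1 zo by blast
    then show ?thesis
      using u v in_V by (simp add: line_of_pencil line_of_Y)
  qed
  fix u v assume u: "u \<in> pencil \<union> Y_adj" and v: "v \<in> pencil \<union> Y_adj"
    and eq: "line_of u = line_of v"
  show "u = v"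
  proof (cases "u \<in> pencil"; cases "v \<in> pencil")
    assume "u \<in> pencil" "v \<in> pencil"
    then show "u = v"
      using inj_on_pencil eq by (simp add: line_of_pencil inj_on_def)
  next
    assume "u \<notin> pencil" "v \<notin> pencil"
    then have "u \<in> Y_adj" "v \<in> Y_adj"
      using u v by blast+
    then show "u = v"
      using gline_YY_inj y1 eq by (auto simp: line_of_Y Y_adj_def)
  qed (use pencil_ne_Y_adj u v eq in blast)+
qed

lemma line_of_x0_ne_Y_collide: "v \<in> Y_collide \<Longrightarrow> line_of x0 \<noteq> line_of v"
proof
  assume v: "v \<in> Y_collide" and "line_of x0 = line_of v"
  then have "gline v z1 = V"
    using y1 z1 gline_YZ_universal_if_eq_gline_YY[of v y1 z1]
    by (auto simp: line_of_x0 line_of_Y Y_collide_def)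
  then show False
    using v z1 gline_YZ_ne_V by (auto simp: Y_collide_def)
qed

lemma line_of_x0_ne_Z_collide: "v \<in> Z_collide \<Longrightarrow> line_of x0 \<noteq> line_of v"
proof
  assume v: "v \<in> Z_collide" and "line_of x0 = line_of v"
  moreover have "gline z1 y1 = gline y1 z1"
    using y1 z1 in_V by (simp add: gline_commute)
  ultimately have "gline v y1 = V"
    using y1 z1 swap.gline_YZ_universal_if_eq_gline_YY[of v z1 y1]
    by (auto simp: line_of_x0 line_of_Z_collide Z_collide_def)
  then show False
    using v y1 gline_YZ_ne_V by (auto simp: Z_collide_def)
qed

lemma line_of_Y_collide_ne_Z_collide:
  "u \<in> Y_collide \<Longrightarrow> v \<in> Z_collide \<Longrightarrow> line_of u \<noteq> line_of v"
proof
  assume u: "u \<in> Y_collide" and v: "v \<in> Z_collide" and "line_of u = line_of v"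
  then have "gline u z1 = V"
    using gline_YZ_universal_if_pencil_collisions[OF x0 y1 z1]
    by (auto simp: line_of_Y line_of_Z_collide Y_collide_def Z_collide_def)
  then show False
    using u z1 gline_YZ_ne_V by (auto simp: Y_collide_def)
qed

lemma inj_on_line_of_collide: "inj_on line_of ({x0} \<union> Y_collide \<union> Z_collide)"
proof (rule inj_onI)
  fix u v assume "u \<in> {x0} \<union> Y_collide \<union> Z_collide" "v \<in> {x0} \<union> Y_collide \<union> Z_collide"
    and eq: "line_of u = line_of v"
  then consider "u = x0" "v = x0" | "u \<in> Y_collide" "v \<in> Y_collide"
    | "u \<in> Z_collide" "v \<in> Z_collide" | "u = x0" "v \<in> Y_collide \<union> Z_collide"
    | "v = x0" "u \<in> Y_collide \<union> Z_collide" | "u \<in> Y_collide" "v \<in> Z_collide"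
    | "v \<in> Y_collide" "u \<in> Z_collide"
    by blast
  then show "u = v"
  proof cases
    case 2
    then show ?thesis
      using gline_YY_inj y1 eq by (auto simp: line_of_Y Y_collide_def)
  next
    case 3
    then show ?thesis
      using swap.gline_YY_inj z1 eq by (auto simp: line_of_Z_collide Z_collide_def)
  qed (use eq line_of_x0_ne_Y_collide line_of_x0_ne_Z_collide line_of_Y_collide_ne_Z_collide
       in fastforce)+
qed

lemma inj_on_line_of_avoiding_x0: "inj_on line_of ({x0} \<union> Y_collide \<union> Z_collide \<union> Z_adj)"
proof -
  have "inj_on line_of Z_adj"
    using swap.gline_YY_inj zo by (auto simp: inj_on_def line_of_Z_adj Z_adj_def)
  moreover have "line_of u \<noteq> line_of v" if "u \<in> {x0} \<union> Y_collide \<union> Z_collide" "v \<in> Z_adj" for u v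
    using z1_in_line_of[OF that(1)] z1_notin_line_of[OF that(2)] by auto
  ultimately show ?thesis
    using inj_on_line_of_collide by (auto simp: inj_on_Un)
qed

lemma card_V_le_card_lines: "card V \<le> card (lines V (gdist V E))"
proof -
  let ?through = "pencil \<union> Y_adj" and ?avoiding = "{x0} \<union> Y_collide \<union> Z_collide \<union> Z_adj"
  have cover: "?through \<union> ?avoiding = V"
    using x0 in_V by (auto simp: pencil_def Y_adj_def Y_collide_def Z_adj_def Z_collide_def)
  have "line_of u \<noteq> line_of v" if "u \<in> ?through" "v \<in> ?avoiding" for u v
    using x0_in_line_of[OF that(1)] x0_notin_line_of[OF that(2)] by auto
  then have "inj_on line_of (?through \<union> ?avoiding)"
    using inj_on_Un[of line_of ?through ?avoiding] inj_on_line_of_through_x0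
      inj_on_line_of_avoiding_x0 by blast
  then have "inj_on line_of V"
    by (rule back_subst[of "inj_on line_of"]) (rule cover)
  moreover have "line_of v \<in> lines V (gdist V E)" if "v \<in> V" for v
    using that
    by (cases rule: line_of_cases)
      (use that x0 y1 z1 zo in_V disjoint_parts in \<open>auto intro!: line_in_lines\<close>)
  ultimately show ?thesis
    using finite_lines[OF finite_V] by (blast intro: card_inj_on_le)
qed

end

theorem proposition1:
  fixes V :: "'a set" and E :: "'a \<Rightarrow> 'a \<Rightarrow> bool" and X Y Z :: "'a set"
  assumes "simple_graph V E"
    and "connected_graph V E"
    and "X \<noteq> {}" and "Y \<noteq> {}" and "Z \<noteq> {}"
    and "X \<union> Y \<union> Z = V"
    and "X \<inter> Y = {}" and "X \<inter> Z = {}" and "Y \<inter> Z = {}"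
    and "stable_set E X" and "stable_set E Y" and "stable_set E Z"
    and "\<forall>y\<in>Y. \<forall>z\<in>Z. E y z"
    and "\<forall>x\<in>X. (\<exists>y\<in>Y. E x y) \<and> (\<exists>z\<in>Z. E x z)"
  shows "de_Bruijn_Erdos V (gdist V E)"
proof (cases "has_universal_line V (gdist V E)")
  case False
  (* Connectivity and the non-emptiness of Y and Z follow from the other hypotheses. *)
  interpret stable_tripartition V E X Y Z
    using assms by unfold_locales auto
  consider (Z) x0 zo where "x0 \<in> X" "zo \<in> Z" "\<not> E x0 zo"
    | (Y) x0 yo where "x0 \<in> X" "yo \<in> Y" "\<not> E x0 yo"
    | (complete) "\<And>x w. x \<in> X \<Longrightarrow> w \<in> Y \<union> Z \<Longrightarrow> E x w"
    by blast
  then have "card V \<le> card (lines V (gdist V E))"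
  proof cases
    case Z
    then obtain y1 z1 where "y1 \<in> Y" "E x0 y1" "z1 \<in> Z" "E x0 z1"
      using X_neighbours by blast
    with Z False interpret stable_tripartition_nonadjacent V E X Y Z x0 y1 z1 zo
      by unfold_locales
    show ?thesis
      by (rule card_V_le_card_lines)
  next
    case Y
    then obtain y1 z1 where "y1 \<in> Y" "E x0 y1" "z1 \<in> Z" "E x0 z1"
      using X_neighbours by blast
    with Y False interpret stable_tripartition_nonadjacent V E X Z Y x0 z1 y1 yo
      by unfold_locales
    show ?thesis
      by (rule card_V_le_card_lines)
  next
    case complete
    obtain x0 y1 z1 where "x0 \<in> X" "y1 \<in> Y" "z1 \<in> Z"
      using X_nonempty X_neighbours by blast
    with complete False interpret complete_tripartition V E X Y Z x0 y1 z1
      by unfold_locales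
    show ?thesis
      by (rule card_V_le_card_lines)
  qed
  then show ?thesis
    by (simp add: de_Bruijn_Erdos_def)
qed (simp add: de_Bruijn_Erdos_def)

end
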